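(* Let $m,K$ be positive integers, and for $\ell\in\{1,\dots,K\}$ let $\mathbf B_\ell$ be a real $m\times s_\ell$ matrix. Let $\alpha\in\mathbb R$ and let $\boldsymbol\Sigma$ be any $m\times m$ symmetric nonnegative definite matrix such that $\mathrm{tr}(\mathbf B_\ell'\boldsymbol\Sigma\mathbf B_\ell)\le\alpha$ for all $\ell\in\{1,\dots,K\}$. Let $\mathbf w=(w_1,\dots,w_K)'\in\mathbb R^K$ have nonnegative components summing to $1$, and let $\mathbf N(\mathbf w)=\sum_{\ell=1}^K w_\ell\mathbf B_\ell\mathbf B_\ell'$. Let $\mathbf X$ be a real $m\times r$ matrix with $\mathcal C(\mathbf X)\subseteq\mathcal C(\mathbf N(\mathbf w))$. Then $$\mathrm{tr}(\mathbf X'\boldsymbol\Sigma\mathbf X)\le \alpha\,\lambda_{\max}\big(\mathbf X'\mathbf N^+(\mathbf w)\mathbf X\big).$$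
   Context: $\mathcal C(\cdot)$ denotes the column space of a matrix, $\mathbf A^+$ the Moore–Penrose pseudoinverse, $\mathbf A'$ the transpose, and $\lambda_{\max}$ the largest eigenvalue of a symmetric matrix. *)

theory Defs
  imports "Jordan_Normal_Form.Matrix" "Jordan_Normal_Form.Char_Poly"
begin

definition mtrace :: "'a :: comm_monoid_add mat \<Rightarrow> 'a" where
  "mtrace A = (\<Sum>i<dim_row A. A $$ (i, i))"

definition col_space :: "'a :: semiring_0 mat \<Rightarrow> 'a vec set" where
  "col_space A = {A *\<^sub>v x | x. x \<in> carrier_vec (dim_col A)}"

definition pinv :: "real mat \<Rightarrow> real mat" where
  "pinv A = (THE G. G \<in> carrier_mat (dim_col A) (dim_row A) \<and>
                    A * G * A = A \<and> G * A * G = G \<and>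
                    transpose_mat (A * G) = A * G \<and> transpose_mat (G * A) = G * A)"

definition sym_nnd :: "nat \<Rightarrow> real mat \<Rightarrow> bool" where
  "sym_nnd n S \<longleftrightarrow> S \<in> carrier_mat n n \<and> transpose_mat S = S \<and>
     (\<forall>v \<in> carrier_vec n. v \<bullet> (S *\<^sub>v v) \<ge> 0)"

text \<open>Largest eigenvalue (of a real symmetric matrix, whose eigenvalues are all real).\<close>
definition lambda_max :: "real mat \<Rightarrow> real" where
  "lambda_max A = Max {k. eigenvalue A k}"

definition Nmat :: "nat \<Rightarrow> nat \<Rightarrow> (nat \<Rightarrow> real) \<Rightarrow> (nat \<Rightarrow> real mat) \<Rightarrow> real mat" where
  "Nmat m K w B = mat m m (\<lambda>(i, j). \<Sum>l\<in>{1..K}. (w l \<cdot>\<^sub>m (B l * transpose_mat (B l))) $$ (i, j))"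

end

(*
  Write N = N(w) and lambda = lambda_max(X^T N^+ X).  For x in R^m and y = X^T x, the inclusion
  C(X) <= C(N) gives a vector a = N^+ X y with N a = X y, and the Cauchy-Schwarz inequality for
  the semi-inner product of N yields |y|^4 = (a . N x)^2 <= (y . X^T N^+ X y)(x . N x)
  <= lambda |y|^2 (x . N x).  Hence X X^T <= lambda N in the Loewner order, and pairing with
  the nonnegative definite Sigma (diagonalised) gives
  tr(X^T Sigma X) <= lambda sum_l w_l tr(B_l^T Sigma B_l) <= lambda alpha.

  The spectral decomposition of real symmetric matrices, on which this rests, is obtained
  variationally: on the orthogonal complement of the eigenvectors already found, the supremum
  of the Rayleigh quotient is again an eigenvalue.
*)

theory Submission
  imports Defs
begin

section \<open>Quadratic forms and norms\<close>

lemma quadratic_nonneg_imp_discriminant_le: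
  fixes p q s :: real
  assumes nonneg: "\<And>t. 0 \<le> p + 2*t*q + t^2*s" and s: "0 \<le> s"
  shows "q^2 \<le> p*s"
proof (cases "s = 0")
  case True
  have "q = 0"
  proof (rule ccontr)
    assume q: "q \<noteq> 0"
    have "0 \<le> p + 2*(-(p+1)/(2*q))*q + (-(p+1)/(2*q))^2*s" by (rule nonneg)
    also have "\<dots> = -1" using q True by (simp add: field_simps)
    finally show False by simp
  qed
  then show ?thesis using True nonneg[of 0] by simp
next
  case False
  with s have s0: "s > 0" by simp
  have "0 \<le> p + 2*(-q/s)*q + (-q/s)^2*s" by (rule nonneg)
  also have "\<dots> = p - q^2/s" using s0 by (simp add: field_simps power2_eq_square)
  finally have "q^2/s \<le> p" by simp
  then show ?thesis using s0 by (simp add: field_simps)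
qed

lemma cauchy_schwarz_sum:
  fixes a b :: "'i \<Rightarrow> real"
  shows "(\<Sum>i\<in>I. a i * b i)^2 \<le> (\<Sum>i\<in>I. a i ^ 2) * (\<Sum>i\<in>I. b i ^ 2)"
proof (rule quadratic_nonneg_imp_discriminant_le)
  fix t :: real
  have "0 \<le> (\<Sum>i\<in>I. (a i + t * b i)^2)" by (simp add: sum_nonneg)
  also have "\<dots> = (\<Sum>i\<in>I. a i ^ 2) + 2*t*(\<Sum>i\<in>I. a i * b i) + t^2*(\<Sum>i\<in>I. b i ^ 2)"
    by (simp add: sum.distrib sum_distrib_left power2_eq_square algebra_simps)
  finally show "0 \<le> (\<Sum>i\<in>I. a i ^ 2) + 2*t*(\<Sum>i\<in>I. a i * b i) + t^2*(\<Sum>i\<in>I. b i ^ 2)" .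
qed (simp add: sum_nonneg)

lemma scalar_prod_self_nonneg: "0 \<le> (v :: real vec) \<bullet> v"
  using conjugate_square_ge_0_vec[of v] by simp

lemma scalar_prod_self_pos_iff:
  "(v :: real vec) \<in> carrier_vec n \<Longrightarrow> 0 < v \<bullet> v \<longleftrightarrow> v \<noteq> 0\<^sub>v n"
  using conjugate_square_greater_0_vec[of v n] by simp

lemma scalar_prod_self_eq_sum_squares:
  "(x :: real vec) \<in> carrier_vec n \<Longrightarrow> x \<bullet> x = (\<Sum>a<n. (x $ a)^2)"
  by (simp add: scalar_prod_def lessThan_atLeast0 power2_eq_square)

lemma unit_smult_inverse_sqrt:
  assumes x: "(x :: real vec) \<in> carrier_vec n" and x0: "x \<noteq> 0\<^sub>v n"
  shows "(inverse (sqrt (x \<bullet> x)) \<cdot>\<^sub>v x) \<bullet> (inverse (sqrt (x \<bullet> x)) \<cdot>\<^sub>v x) = 1"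
proof -
  have "0 < x \<bullet> x" using scalar_prod_self_pos_iff[OF x] x0 by simp
  then show ?thesis using x by (simp add: power2_eq_square[symmetric] field_simps)
qed

definition sq_frobenius :: "real mat \<Rightarrow> real" where
  "sq_frobenius M = (\<Sum>a<dim_row M. \<Sum>b<dim_col M. (M $$ (a,b))^2)"

lemma sq_frobenius_nonneg: "0 \<le> sq_frobenius M"
  unfolding sq_frobenius_def by (intro sum_nonneg) simp

lemma sq_norm_mult_mat_vec_le:
  assumes M: "(M :: real mat) \<in> carrier_mat nr nc" and x: "x \<in> carrier_vec nc"
  shows "(M *\<^sub>v x) \<bullet> (M *\<^sub>v x) \<le> sq_frobenius M * (x \<bullet> x)"
proof -
  have "(M *\<^sub>v x) \<bullet> (M *\<^sub>v x) = (\<Sum>a<nr. (\<Sum>b<nc. M $$ (a,b) * x $ b)^2)"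
    using M x by (subst scalar_prod_self_eq_sum_squares[of _ nr])
      (auto intro!: sum.cong simp: scalar_prod_def row_def lessThan_atLeast0)
  also have "\<dots> \<le> (\<Sum>a<nr. (\<Sum>b<nc. (M $$ (a,b))^2) * (\<Sum>b<nc. (x $ b)^2))"
    by (intro sum_mono cauchy_schwarz_sum)
  also have "\<dots> = sq_frobenius M * (x \<bullet> x)"
    using M x by (simp add: sq_frobenius_def scalar_prod_self_eq_sum_squares[OF x] sum_distrib_right)
  finally show ?thesis .
qed

lemma abs_quadratic_form_le:
  assumes A: "(A :: real mat) \<in> carrier_mat n n" and u: "u \<in> carrier_vec n"
  shows "\<bar>u \<bullet> (A *\<^sub>v u)\<bar> \<le> (1 + sq_frobenius A) / 2 * (u \<bullet> u)"
proof -
  define y where "y = A *\<^sub>v u"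
  have y: "y \<in> carrier_vec n" using A u by (simp add: y_def)
  have "u \<bullet> u + y \<bullet> y - 2 * (u \<bullet> y) = (\<Sum>a<n. (u $ a - y $ a)^2)"
    using u y by (simp add: scalar_prod_def lessThan_atLeast0 power2_eq_square sum_subtractf[symmetric]
        sum.distrib[symmetric] sum_distrib_left algebra_simps)
  moreover have "u \<bullet> u + y \<bullet> y + 2 * (u \<bullet> y) = (\<Sum>a<n. (u $ a + y $ a)^2)"
    using u y by (simp add: scalar_prod_def lessThan_atLeast0 power2_eq_square
        sum.distrib[symmetric] sum_distrib_left algebra_simps)
  moreover have "0 \<le> (\<Sum>a<n. (u $ a - y $ a)^2)" "0 \<le> (\<Sum>a<n. (u $ a + y $ a)^2)"
    by (simp_all add: sum_nonneg)
  ultimately have "2 * \<bar>u \<bullet> y\<bar> \<le> u \<bullet> u + y \<bullet> y" by linarith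
  also have "y \<bullet> y \<le> sq_frobenius A * (u \<bullet> u)"
    unfolding y_def by (rule sq_norm_mult_mat_vec_le[OF A u])
  finally show ?thesis by (simp add: y_def algebra_simps)
qed

lemma scalar_prod_mult_mat_vec_sym:
  fixes A :: "real mat"
  assumes A: "A \<in> carrier_mat n n" and sym: "transpose_mat A = A"
    and x: "x \<in> carrier_vec n" and y: "y \<in> carrier_vec n"
  shows "x \<bullet> (A *\<^sub>v y) = y \<bullet> (A *\<^sub>v x)"
proof -
  have "x \<bullet> (A *\<^sub>v y) = (transpose_mat A *\<^sub>v y) \<bullet> x"
    using A x y by (subst comm_scalar_prod[of _ n]) (simp_all add: sym)
  also have "\<dots> = y \<bullet> (A *\<^sub>v x)" by (rule transpose_vec_mult_scalar[OF A x y])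
  finally show ?thesis .
qed

lemma quadratic_form_add_smult:
  fixes A :: "real mat"
  assumes A: "A \<in> carrier_mat n n" and sym: "transpose_mat A = A"
    and u: "u \<in> carrier_vec n" and w: "w \<in> carrier_vec n"
  shows "(u + t \<cdot>\<^sub>v w) \<bullet> (A *\<^sub>v (u + t \<cdot>\<^sub>v w)) =
     u \<bullet> (A *\<^sub>v u) + 2 * t * (w \<bullet> (A *\<^sub>v u)) + t^2 * (w \<bullet> (A *\<^sub>v w))"
proof -
  have Au: "A *\<^sub>v u \<in> carrier_vec n" and Aw: "A *\<^sub>v w \<in> carrier_vec n" using A u w by auto
  have "A *\<^sub>v (u + t \<cdot>\<^sub>v w) = A *\<^sub>v u + t \<cdot>\<^sub>v (A *\<^sub>v w)"
    using A u w by (simp add: mult_add_distrib_mat_vec[of _ n n] mult_mat_vec[OF A w])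
  then have "(u + t \<cdot>\<^sub>v w) \<bullet> (A *\<^sub>v (u + t \<cdot>\<^sub>v w)) =
      u \<bullet> (A *\<^sub>v u) + t * (u \<bullet> (A *\<^sub>v w)) + (t * (w \<bullet> (A *\<^sub>v u)) + t * (t * (w \<bullet> (A *\<^sub>v w))))"
    using u w Au Aw by (simp add: add_scalar_prod_distrib[of _ n] scalar_prod_add_distrib[of _ n])
  also have "u \<bullet> (A *\<^sub>v w) = w \<bullet> (A *\<^sub>v u)" by (rule scalar_prod_mult_mat_vec_sym[OF A sym u w])
  finally show ?thesis by (simp add: power2_eq_square algebra_simps)
qed

lemma smult_mat_mult_mat_vec:
  assumes "A \<in> carrier_mat nr nc" and "v \<in> carrier_vec nc"
  shows "(k \<cdot>\<^sub>m A) *\<^sub>v v = k \<cdot>\<^sub>v (A *\<^sub>v (v :: 'a :: comm_ring vec))"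
  using assms by (intro eq_vecI) (auto simp: scalar_prod_def sum_distrib_left ac_simps)

lemma mat_eq_if_mult_vec_eq:
  fixes A B :: "real mat"
  assumes A: "A \<in> carrier_mat nr n" and B: "B \<in> carrier_mat nr n"
    and eq: "\<And>x. x \<in> carrier_vec n \<Longrightarrow> A *\<^sub>v x = B *\<^sub>v x"
  shows "A = B"
proof (rule eq_matI)
  fix i j assume i: "i < dim_row B" and j: "j < dim_col B"
  have "(A *\<^sub>v unit_vec n j) $ i = (B *\<^sub>v unit_vec n j) $ i" by (simp add: eq)
  then show "A $$ (i, j) = B $$ (i, j)" using A B i j by simp
qed (use A B in auto)

section \<open>Orthonormal families and spectral sums\<close>

definition orthonormal :: "nat \<Rightarrow> nat \<Rightarrow> (nat \<Rightarrow> real vec) \<Rightarrow> bool" where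
  "orthonormal n k v \<longleftrightarrow>
     (\<forall>i<k. v i \<in> carrier_vec n) \<and> (\<forall>i<k. \<forall>j<k. v i \<bullet> v j = (if i = j then 1 else 0))"

definition spectral_mat :: "nat \<Rightarrow> nat \<Rightarrow> (nat \<Rightarrow> real vec) \<Rightarrow> (nat \<Rightarrow> real) \<Rightarrow> real mat" where
  "spectral_mat n k v f = mat n n (\<lambda>(a,b). \<Sum>i<k. f i * v i $ a * v i $ b)"

lemma orthonormal_carrier: "orthonormal n k v \<Longrightarrow> i < k \<Longrightarrow> v i \<in> carrier_vec n"
  by (simp add: orthonormal_def)

lemma orthonormal_scalar_prod:
  "orthonormal n k v \<Longrightarrow> i < k \<Longrightarrow> j < k \<Longrightarrow> v i \<bullet> v j = (if i = j then 1 else 0)"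
  by (simp add: orthonormal_def)

lemma orthonormal_extend:
  assumes on: "orthonormal n k v" and x: "x \<in> carrier_vec n" and xx: "x \<bullet> x = 1"
    and orth: "\<And>i. i < k \<Longrightarrow> v i \<bullet> x = 0"
  shows "orthonormal n (Suc k) (v(k := x))"
proof -
  have orth': "x \<bullet> v i = 0" if "i < k" for i
    using comm_scalar_prod[of x n "v i"] orthonormal_carrier[OF on that] x orth[OF that] by simp
  show ?thesis unfolding orthonormal_def
  proof (intro conjI allI impI)
    fix i assume "i < Suc k"
    then show "(v(k := x)) i \<in> carrier_vec n" using x orthonormal_carrier[OF on] by (cases "i = k") auto
  next
    fix i j assume i: "i < Suc k" and j: "j < Suc k"
    show "(v(k := x)) i \<bullet> (v(k := x)) j = (if i = j then 1 else 0)"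
      using i j xx orth orth' orthonormal_scalar_prod[OF on] by (auto simp: less_Suc_eq)
  qed
qed

lemma spectral_mat_carrier[simp]: "spectral_mat n k v f \<in> carrier_mat n n"
  by (simp add: spectral_mat_def)

lemma spectral_mat_dim[simp]:
  "dim_row (spectral_mat n k v f) = n" "dim_col (spectral_mat n k v f) = n"
  by (simp_all add: spectral_mat_def)

lemma transpose_spectral_mat[simp]: "transpose_mat (spectral_mat n k v f) = spectral_mat n k v f"
  by (rule eq_matI) (auto simp: spectral_mat_def mult.commute mult.left_commute)

lemma spectral_mat_mult_vec:
  assumes x: "x \<in> carrier_vec n" and v: "\<And>i. i < k \<Longrightarrow> v i \<in> carrier_vec n"
  shows "spectral_mat n k v f *\<^sub>v x = vec n (\<lambda>a. \<Sum>i<k. f i * (v i \<bullet> x) * v i $ a)"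
proof (rule eq_vecI)
  fix a assume "a < dim_vec (vec n (\<lambda>a. \<Sum>i<k. f i * (v i \<bullet> x) * v i $ a))"
  then have a: "a < n" by simp
  have "(spectral_mat n k v f *\<^sub>v x) $ a = (\<Sum>b<n. (\<Sum>i<k. f i * v i $ a * v i $ b) * x $ b)"
    using a x by (simp add: spectral_mat_def scalar_prod_def row_def lessThan_atLeast0)
  also have "\<dots> = (\<Sum>i<k. \<Sum>b<n. f i * v i $ a * v i $ b * x $ b)"
    by (simp add: sum_distrib_right sum.swap[of _ "{..<n}"])
  also have "\<dots> = (\<Sum>i<k. f i * (v i \<bullet> x) * v i $ a)"
    using v x by (intro sum.cong refl) (simp add: scalar_prod_def sum_distrib_left lessThan_atLeast0 mult_ac)
  finally show "(spectral_mat n k v f *\<^sub>v x) $ a = vec n (\<lambda>a. \<Sum>i<k. f i * (v i \<bullet> x) * v i $ a) $ a"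
    using a by simp
qed simp

lemma scalar_prod_lincomb:
  fixes y :: "real vec" and g :: "nat \<Rightarrow> real"
  assumes y: "y \<in> carrier_vec n" and v: "\<And>i. i < k \<Longrightarrow> v i \<in> carrier_vec n"
  shows "y \<bullet> vec n (\<lambda>a. \<Sum>i<k. g i * v i $ a) = (\<Sum>i<k. g i * (y \<bullet> v i))"
proof -
  have "y \<bullet> vec n (\<lambda>a. \<Sum>i<k. g i * v i $ a) = (\<Sum>a<n. \<Sum>i<k. y $ a * (g i * v i $ a))"
    using y by (simp add: scalar_prod_def lessThan_atLeast0 sum_distrib_left)
  also have "\<dots> = (\<Sum>i<k. \<Sum>a<n. y $ a * (g i * v i $ a))" by (rule sum.swap)
  also have "\<dots> = (\<Sum>i<k. g i * (y \<bullet> v i))"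
  proof (intro sum.cong refl)
    fix i assume "i \<in> {..<k}"
    then have "dim_vec (v i) = n" using v by auto
    then show "(\<Sum>a<n. y $ a * (g i * v i $ a)) = g i * (y \<bullet> v i)"
      by (simp add: scalar_prod_def sum_distrib_left lessThan_atLeast0 mult_ac)
  qed
  finally show ?thesis .
qed

lemma spectral_mat_bilinear:
  assumes x: "x \<in> carrier_vec n" and y: "y \<in> carrier_vec n"
    and v: "\<And>i. i < k \<Longrightarrow> v i \<in> carrier_vec n"
  shows "y \<bullet> (spectral_mat n k v f *\<^sub>v x) = (\<Sum>i<k. f i * (v i \<bullet> x) * (v i \<bullet> y))"
proof -
  have "y \<bullet> (spectral_mat n k v f *\<^sub>v x) = (\<Sum>i<k. f i * (v i \<bullet> x) * (y \<bullet> v i))"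
    by (simp add: spectral_mat_mult_vec[OF x v] scalar_prod_lincomb[OF y v])
  also have "\<dots> = (\<Sum>i<k. f i * (v i \<bullet> x) * (v i \<bullet> y))"
    using v y by (intro sum.cong refl) (simp add: comm_scalar_prod[of y n])
  finally show ?thesis .
qed

lemma spectral_mat_quadratic_form:
  assumes on: "orthonormal n k v" and x: "x \<in> carrier_vec n"
  shows "x \<bullet> (spectral_mat n k v f *\<^sub>v x) = (\<Sum>i<k. f i * (v i \<bullet> x)^2)"
  using spectral_mat_bilinear[OF x x, of k v f] on
  by (simp add: orthonormal_carrier power2_eq_square mult_ac)

lemma spectral_mat_coeff:
  assumes on: "orthonormal n k v" and j: "j < k" and x: "x \<in> carrier_vec n"
  shows "v j \<bullet> (spectral_mat n k v f *\<^sub>v x) = f j * (v j \<bullet> x)"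
proof -
  have "v j \<bullet> (spectral_mat n k v f *\<^sub>v x) = (\<Sum>i<k. f i * (v i \<bullet> x) * (v i \<bullet> v j))"
    by (rule spectral_mat_bilinear[OF x]) (use on j in \<open>auto simp: orthonormal_carrier\<close>)
  also have "\<dots> = (\<Sum>i<k. if i = j then f j * (v j \<bullet> x) else 0)"
    using on j by (intro sum.cong refl) (auto simp: orthonormal_scalar_prod)
  finally show ?thesis using j by simp
qed

lemma spectral_mat_mult:
  assumes on: "orthonormal n k v"
  shows "spectral_mat n k v f * spectral_mat n k v g = spectral_mat n k v (\<lambda>i. f i * g i)"
proof (rule mat_eq_if_mult_vec_eq[of _ n n])
  fix x :: "real vec" assume x: "x \<in> carrier_vec n"
  have v: "\<And>i. i < k \<Longrightarrow> v i \<in> carrier_vec n" using on by (simp add: orthonormal_carrier)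
  have gx: "spectral_mat n k v g *\<^sub>v x \<in> carrier_vec n"
    using x by (rule mult_mat_vec_carrier[OF spectral_mat_carrier])
  have "spectral_mat n k v f * spectral_mat n k v g *\<^sub>v x
      = spectral_mat n k v f *\<^sub>v (spectral_mat n k v g *\<^sub>v x)"
    using x by (simp add: assoc_mult_mat_vec[of _ n n _ n])
  also have "\<dots> = vec n (\<lambda>a. \<Sum>i<k. (f i * g i) * (v i \<bullet> x) * v i $ a)"
    using on x by (auto intro!: eq_vecI sum.cong simp: spectral_mat_mult_vec[OF gx v] spectral_mat_coeff)
  also have "\<dots> = spectral_mat n k v (\<lambda>i. f i * g i) *\<^sub>v x"
    by (rule spectral_mat_mult_vec[OF x v, symmetric])
  finally show "spectral_mat n k v f * spectral_mat n k v g *\<^sub>v x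
      = spectral_mat n k v (\<lambda>i. f i * g i) *\<^sub>v x" .
qed auto

lemma orthonormal_basis_spectral_mat_one:
  assumes on: "orthonormal n n v"
  shows "spectral_mat n n v (\<lambda>_. 1) = 1\<^sub>m n"
proof -
  define U where "U = mat n n (\<lambda>(a,i). v i $ a)"
  have U: "U \<in> carrier_mat n n" by (simp add: U_def)
  have col_U: "col U j = v j" if "j < n" for j
    using that orthonormal_carrier[OF on that] unfolding U_def by (intro eq_vecI) simp_all
  have "transpose_mat U * U = 1\<^sub>m n"
    using U on by (intro eq_matI) (simp_all add: col_U orthonormal_scalar_prod)
  then have UU: "U * transpose_mat U = 1\<^sub>m n"
    using mat_mult_left_right_inverse[of "transpose_mat U" n U] U by simp
  have row_U: "row U a = vec n (\<lambda>i. v i $ a)" if "a < n" for a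
    using that unfolding U_def by (intro eq_vecI) simp_all
  show ?thesis
  proof (rule eq_matI)
    fix a b assume a: "a < dim_row (1\<^sub>m n)" and b: "b < dim_col (1\<^sub>m n)"
    have "spectral_mat n n v (\<lambda>_. 1) $$ (a,b) = row U a \<bullet> row U b"
      using a b by (simp add: spectral_mat_def row_U scalar_prod_def lessThan_atLeast0)
    also have "\<dots> = (U * transpose_mat U) $$ (a,b)" using a b U by simp
    finally show "spectral_mat n n v (\<lambda>_. 1) $$ (a,b) = 1\<^sub>m n $$ (a,b)" by (simp add: UU)
  qed simp_all
qed

lemma parseval:
  assumes on: "orthonormal n n v" and x: "x \<in> carrier_vec n"
  shows "x \<bullet> x = (\<Sum>i<n. (v i \<bullet> x)^2)"
  using spectral_mat_quadratic_form[OF on x, of "\<lambda>_. 1"] x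
  by (simp add: orthonormal_basis_spectral_mat_one[OF on])

lemma orthonormal_basis_vec_eq:
  assumes on: "orthonormal n n v" and x: "x \<in> carrier_vec n" and y: "y \<in> carrier_vec n"
    and eq: "\<And>j. j < n \<Longrightarrow> v j \<bullet> x = v j \<bullet> y"
  shows "x = y"
proof -
  have "x = spectral_mat n n v (\<lambda>_. 1) *\<^sub>v x"
    using x by (simp add: orthonormal_basis_spectral_mat_one[OF on])
  also have "\<dots> = spectral_mat n n v (\<lambda>_. 1) *\<^sub>v y"
    using on x y eq by (simp add: spectral_mat_mult_vec orthonormal_carrier)
  also have "\<dots> = y"
    using y by (simp add: orthonormal_basis_spectral_mat_one[OF on])
  finally show ?thesis .
qed

section \<open>The spectral theorem for real symmetric matrices\<close>

definition orth_complement :: "nat \<Rightarrow> nat \<Rightarrow> (nat \<Rightarrow> real vec) \<Rightarrow> real vec set" where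
  "orth_complement n k v = {u \<in> carrier_vec n. \<forall>i<k. v i \<bullet> u = 0}"

lemma orth_complement_carrier: "orth_complement n k v \<subseteq> carrier_vec n"
  by (auto simp: orth_complement_def)

lemma orth_complement_lincomb:
  assumes on: "orthonormal n k v" and u: "u \<in> orth_complement n k v" and w: "w \<in> orth_complement n k v"
  shows "a \<cdot>\<^sub>v u + b \<cdot>\<^sub>v w \<in> orth_complement n k v"
  using u w orthonormal_carrier[OF on]
  by (auto simp: orth_complement_def scalar_prod_add_distrib[of _ n])

lemma orth_complement_smult:
  assumes on: "orthonormal n k v" and u: "u \<in> orth_complement n k v"
  shows "a \<cdot>\<^sub>v u \<in> orth_complement n k v"
  using u orthonormal_carrier[OF on] by (auto simp: orth_complement_def)

lemma scalar_prod_eigenvector_mult_mat_vec: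
  fixes A :: "real mat"
  assumes A: "A \<in> carrier_mat n n" and sym: "transpose_mat A = A"
    and v: "v \<in> carrier_vec n" and ev: "A *\<^sub>v v = \<mu> \<cdot>\<^sub>v v" and x: "x \<in> carrier_vec n"
  shows "v \<bullet> (A *\<^sub>v x) = \<mu> * (v \<bullet> x)"
  using scalar_prod_mult_mat_vec_sym[OF A sym v x] ev v x by (simp add: comm_scalar_prod[of x n])

lemma orth_complement_eigen_invariant:
  fixes A :: "real mat"
  assumes A: "A \<in> carrier_mat n n" and sym: "transpose_mat A = A"
    and on: "orthonormal n k v" and ev: "\<forall>i<k. A *\<^sub>v v i = \<mu> i \<cdot>\<^sub>v v i"
    and u: "u \<in> orth_complement n k v"
  shows "A *\<^sub>v u \<in> orth_complement n k v"
  using u A orthonormal_carrier[OF on]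
  by (auto simp: orth_complement_def scalar_prod_eigenvector_mult_mat_vec[OF A sym _ ev[rule_format]])

text \<open>\<open>P = \<Sum>\<^sub>i v\<^sub>i v\<^sub>i\<^sup>T\<close> has trace \<open>k < n\<close>, so some \<open>P\<^sub>a\<^sub>a \<noteq> 1\<close>, and then \<open>e\<^sub>a - P e\<^sub>a\<close> is a
  nonzero vector orthogonal to every \<open>v\<^sub>i\<close>.\<close>

lemma orth_complement_nonzero:
  assumes on: "orthonormal n k v" and kn: "k < n"
  obtains b where "b \<in> orth_complement n k v" and "b \<noteq> 0\<^sub>v n"
proof -
  define P where "P = spectral_mat n k v (\<lambda>_. 1)"
  have v: "v i \<in> carrier_vec n" if "i < k" for i using on that by (rule orthonormal_carrier)
  have "(\<Sum>a<n. P $$ (a,a)) = (\<Sum>i<k. \<Sum>a<n. (v i $ a)^2)"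
    by (simp add: P_def spectral_mat_def power2_eq_square sum.swap[of _ "{..<n}"])
  also have "\<dots> = (\<Sum>i<k. v i \<bullet> v i)"
    by (intro sum.cong refl) (simp add: scalar_prod_self_eq_sum_squares[OF v])
  also have "\<dots> = real k" using on by (simp add: orthonormal_scalar_prod)
  finally have trace_P: "(\<Sum>a<n. P $$ (a,a)) = real k" .
  obtain a where a: "a < n" "P $$ (a,a) \<noteq> 1"
  proof (rule ccontr)
    assume "\<not> thesis"
    with that have "\<forall>a<n. P $$ (a,a) = 1" by blast
    then have "(\<Sum>a<n. P $$ (a,a)) = real n" by simp
    with trace_P kn show False by simp
  qed
  define e :: "real vec" where "e = unit_vec n a"
  define b where "b = e - P *\<^sub>v e"
  have e: "e \<in> carrier_vec n" and Pe: "P *\<^sub>v e \<in> carrier_vec n"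
    by (simp_all add: e_def P_def mult_mat_vec_carrier[OF spectral_mat_carrier])
  have "v i \<bullet> b = 0" if "i < k" for i
    using on that e Pe by (simp add: b_def scalar_prod_minus_distrib[OF v[OF that]] P_def spectral_mat_coeff)
  moreover have "e \<bullet> b = 1 - P $$ (a,a)"
    using a e Pe by (simp add: b_def scalar_prod_minus_distrib e_def P_def)
  then have "b \<noteq> 0\<^sub>v n" using a(2) e by auto
  moreover have "b \<in> carrier_vec n" using e Pe by (simp add: b_def)
  ultimately show ?thesis by (intro that) (auto simp: orth_complement_def)
qed

lemma rayleigh_le_Sup:
  fixes A :: "real mat" and V :: "real vec set"
  assumes A: "A \<in> carrier_mat n n" and V: "V \<subseteq> carrier_vec n"
    and V_smult: "\<And>c u. u \<in> V \<Longrightarrow> c \<cdot>\<^sub>v u \<in> V"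
    and b: "b \<in> V" "b \<noteq> 0\<^sub>v n"
  defines "s \<equiv> Sup {u \<bullet> (A *\<^sub>v u) | u. u \<in> V \<and> u \<bullet> u = 1}"
  shows "\<And>u. u \<in> V \<Longrightarrow> u \<bullet> (A *\<^sub>v u) \<le> s * (u \<bullet> u)"
    and "\<And>\<delta>. 0 < \<delta> \<Longrightarrow> \<exists>u\<in>V. u \<bullet> u = 1 \<and> s - \<delta> < u \<bullet> (A *\<^sub>v u)"
proof -
  define S where "S = {u \<bullet> (A *\<^sub>v u) | u. u \<in> V \<and> u \<bullet> u = 1}"
  have unit: "inverse (sqrt (u \<bullet> u)) \<cdot>\<^sub>v u \<in> V \<and>
      (inverse (sqrt (u \<bullet> u)) \<cdot>\<^sub>v u) \<bullet> (inverse (sqrt (u \<bullet> u)) \<cdot>\<^sub>v u) = 1"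
    if "u \<in> V" "u \<noteq> 0\<^sub>v n" for u
    using that V V_smult unit_smult_inverse_sqrt[of u n] by auto
  have S_ne: "S \<noteq> {}" using unit[OF b] unfolding S_def by blast
  have S_bdd: "bdd_above S"
  proof (rule bdd_aboveI)
    fix y assume "y \<in> S"
    then obtain u where "u \<in> V" "u \<bullet> u = 1" "y = u \<bullet> (A *\<^sub>v u)" unfolding S_def by blast
    then show "y \<le> (1 + sq_frobenius A) / 2"
      using abs_quadratic_form_le[OF A, of u] V by auto
  qed
  show "u \<bullet> (A *\<^sub>v u) \<le> s * (u \<bullet> u)" if u: "u \<in> V" for u
  proof (cases "u = 0\<^sub>v n")
    case True
    then show ?thesis using A by simp
  next
    case False
    define c where "c = inverse (sqrt (u \<bullet> u))"
    have uc: "u \<in> carrier_vec n" using u V by auto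
    have pos: "0 < u \<bullet> u" using scalar_prod_self_pos_iff[OF uc] False by simp
    have "(c \<cdot>\<^sub>v u) \<bullet> (A *\<^sub>v (c \<cdot>\<^sub>v u)) \<in> S"
      using unit[OF u False] unfolding S_def c_def by blast
    then have "(c \<cdot>\<^sub>v u) \<bullet> (A *\<^sub>v (c \<cdot>\<^sub>v u)) \<le> s"
      unfolding s_def S_def[symmetric] using S_bdd by (rule cSup_upper)
    moreover have "(c \<cdot>\<^sub>v u) \<bullet> (A *\<^sub>v (c \<cdot>\<^sub>v u)) = (u \<bullet> (A *\<^sub>v u)) / (u \<bullet> u)"
      using A uc pos
      by (simp add: mult_mat_vec[OF A uc] c_def power2_eq_square[symmetric] power_inverse divide_inverse)
    ultimately show ?thesis using pos by (simp add: divide_le_eq mult.commute)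
  qed
  show "\<exists>u\<in>V. u \<bullet> u = 1 \<and> s - \<delta> < u \<bullet> (A *\<^sub>v u)" if "0 < \<delta>" for \<delta>
  proof -
    obtain y where "y \<in> S" "s - \<delta> < y"
      using less_cSupE[OF _ S_ne, of "s - \<delta>"] \<open>0 < \<delta>\<close> unfolding s_def S_def[symmetric] by auto
    then show ?thesis unfolding S_def by blast
  qed
qed

lemma rayleigh_defect_le:
  fixes A :: "real mat"
  assumes A: "A \<in> carrier_mat n n" and w: "w \<in> carrier_vec n"
  shows "s * (w \<bullet> w) - w \<bullet> (A *\<^sub>v w) \<le> (\<bar>s\<bar> + 1 + sq_frobenius A) * (w \<bullet> w)"
proof -
  have "s * (w \<bullet> w) \<le> \<bar>s\<bar> * (w \<bullet> w)"
    using scalar_prod_self_nonneg[of w] by (intro mult_right_mono) auto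
  moreover have "- (w \<bullet> (A *\<^sub>v w)) \<le> (1 + sq_frobenius A) / 2 * (w \<bullet> w)"
    using abs_quadratic_form_le[OF A w] by linarith
  moreover have "\<dots> \<le> (1 + sq_frobenius A) * (w \<bullet> w)"
    using scalar_prod_self_nonneg[of w] sq_frobenius_nonneg[of A] by (intro mult_right_mono) auto
  ultimately show ?thesis by (simp add: algebra_simps)
qed

lemma rayleigh_defect_add_smult_residual:
  fixes A :: "real mat" and s \<tau> :: real
  assumes A: "A \<in> carrier_mat n n" and sym: "transpose_mat A = A" and u: "u \<in> carrier_vec n"
  defines "w \<equiv> s \<cdot>\<^sub>v u - A *\<^sub>v u"
  shows "s * ((u + \<tau> \<cdot>\<^sub>v w) \<bullet> (u + \<tau> \<cdot>\<^sub>v w)) - (u + \<tau> \<cdot>\<^sub>v w) \<bullet> (A *\<^sub>v (u + \<tau> \<cdot>\<^sub>v w))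
    = (s * (u \<bullet> u) - u \<bullet> (A *\<^sub>v u)) + 2 * \<tau> * (w \<bullet> w) + \<tau>^2 * (s * (w \<bullet> w) - w \<bullet> (A *\<^sub>v w))"
proof -
  have Au: "A *\<^sub>v u \<in> carrier_vec n" and w: "w \<in> carrier_vec n" using A u by (simp_all add: w_def)
  have "w \<bullet> w = w \<bullet> (s \<cdot>\<^sub>v u) - w \<bullet> (A *\<^sub>v u)"
    by (subst (2) w_def) (rule scalar_prod_minus_distrib[OF w _ Au], use u in simp)
  then have ww: "s * (w \<bullet> u) - w \<bullet> (A *\<^sub>v u) = w \<bullet> w" using w u by simp
  have "(u + \<tau> \<cdot>\<^sub>v w) \<bullet> (u + \<tau> \<cdot>\<^sub>v w) = u \<bullet> u + 2 * \<tau> * (w \<bullet> u) + \<tau>^2 * (w \<bullet> w)"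
    using quadratic_form_add_smult[OF one_carrier_mat[of n] _ u w, of \<tau>] u w by simp
  then have "s * ((u + \<tau> \<cdot>\<^sub>v w) \<bullet> (u + \<tau> \<cdot>\<^sub>v w)) - (u + \<tau> \<cdot>\<^sub>v w) \<bullet> (A *\<^sub>v (u + \<tau> \<cdot>\<^sub>v w))
      = (s * (u \<bullet> u) - u \<bullet> (A *\<^sub>v u)) + 2 * \<tau> * (s * (w \<bullet> u) - w \<bullet> (A *\<^sub>v u))
        + \<tau>^2 * (s * (w \<bullet> w) - w \<bullet> (A *\<^sub>v w))"
    unfolding quadratic_form_add_smult[OF A sym u w] by (simp add: algebra_simps)
  then show ?thesis by (simp only: ww)
qed

text \<open>If \<open>s\<close> bounds the Rayleigh quotient of \<open>A\<close> on an invariant subspace \<open>V\<close> on which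
  \<open>s \<cdot> 1 - A\<close> has a bounded inverse, then \<open>s\<close> is not approached: expanding
  \<open>s |u + \<tau> w|\<^sup>2 - (u + \<tau> w) \<bullet> A (u + \<tau> w) \<ge> 0\<close> in \<open>\<tau>\<close> for \<open>w = s u - A u\<close> bounds the
  gap at \<open>u\<close> below by a multiple of \<open>|w|\<^sup>2\<close>, and \<open>D w = u\<close> bounds \<open>|w|\<close> below.\<close>

lemma rayleigh_quotient_gap:
  fixes A D :: "real mat" and V :: "real vec set"
  assumes A: "A \<in> carrier_mat n n" and sym: "transpose_mat A = A"
    and V: "V \<subseteq> carrier_vec n"
    and V_lincomb: "\<And>a b u w. u \<in> V \<Longrightarrow> w \<in> V \<Longrightarrow> a \<cdot>\<^sub>v u + b \<cdot>\<^sub>v w \<in> V"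
    and A_V: "\<And>u. u \<in> V \<Longrightarrow> A *\<^sub>v u \<in> V"
    and le_s: "\<And>u. u \<in> V \<Longrightarrow> u \<bullet> (A *\<^sub>v u) \<le> s * (u \<bullet> u)"
    and D: "D \<in> carrier_mat n n" and D_inv: "\<And>u. u \<in> V \<Longrightarrow> D *\<^sub>v (s \<cdot>\<^sub>v u - A *\<^sub>v u) = u"
  shows "\<exists>\<delta>>0. \<forall>u\<in>V. u \<bullet> u = 1 \<longrightarrow> u \<bullet> (A *\<^sub>v u) \<le> s - \<delta>"
proof -
  define K where "K = \<bar>s\<bar> + 1 + sq_frobenius A"
  have K: "K > 0" using sq_frobenius_nonneg[of A] by (simp add: K_def)
  define q where "q u = s * (u \<bullet> u) - u \<bullet> (A *\<^sub>v u)" for u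
  have gap: "1 / (K * (1 + sq_frobenius D)) \<le> q u" if u: "u \<in> V" "u \<bullet> u = 1" for u
  proof -
    have uc: "u \<in> carrier_vec n" using u V by auto
    define w where "w = s \<cdot>\<^sub>v u - A *\<^sub>v u"
    have wc: "w \<in> carrier_vec n" and Au: "A *\<^sub>v u \<in> carrier_vec n" using A uc by (simp_all add: w_def)
    have "w = s \<cdot>\<^sub>v u + (-1) \<cdot>\<^sub>v (A *\<^sub>v u)" using Au uc by (auto simp: w_def)
    then have wV: "w \<in> V" using V_lincomb u A_V by simp
    have expand: "q (u + \<tau> \<cdot>\<^sub>v w) = q u + 2 * \<tau> * (w \<bullet> w) + \<tau>^2 * q w" for \<tau>
      unfolding q_def w_def by (rule rayleigh_defect_add_smult_residual[OF A sym uc])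
    have "u + (- 1 / K) \<cdot>\<^sub>v w \<in> V"
      using V_lincomb[OF u(1) wV, of 1 "- 1 / K"] uc by simp
    then have "0 \<le> q (u + (- 1 / K) \<cdot>\<^sub>v w)" using le_s by (simp add: q_def)
    then have "0 \<le> q u + 2 * (- 1 / K) * (w \<bullet> w) + (- 1 / K)^2 * q w" by (simp only: expand)
    also have "(- 1 / K)^2 * q w \<le> (- 1 / K)^2 * (K * (w \<bullet> w))"
      using rayleigh_defect_le[OF A wc, of s] by (intro mult_left_mono) (simp_all add: q_def K_def)
    finally have wu: "(w \<bullet> w) / K \<le> q u" using K by (simp add: power2_eq_square field_simps)
    have "1 = (D *\<^sub>v w) \<bullet> (D *\<^sub>v w)" using D_inv[OF u(1)] u(2) by (simp add: w_def)
    also have "\<dots> \<le> sq_frobenius D * (w \<bullet> w)" by (rule sq_norm_mult_mat_vec_le[OF D wc])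
    finally have "1 / (1 + sq_frobenius D) \<le> w \<bullet> w"
      using sq_frobenius_nonneg[of D] scalar_prod_self_nonneg[of w]
      by (simp add: divide_le_eq algebra_simps)
    then have "1 / (1 + sq_frobenius D) / K \<le> (w \<bullet> w) / K"
      by (rule divide_right_mono) (use K in simp)
    with wu show ?thesis by (simp add: mult.commute)
  qed
  show ?thesis
  proof (intro exI conjI ballI impI)
    show "0 < 1 / (K * (1 + sq_frobenius D))" using K sq_frobenius_nonneg[of D] by simp
    fix u assume "u \<in> V" "u \<bullet> u = 1"
    with gap[OF this] show "u \<bullet> (A *\<^sub>v u) \<le> s - 1 / (K * (1 + sq_frobenius D))"
      by (simp add: q_def)
  qed
qed

text \<open>The shift by \<open>t P\<close> moves the eigenvalues \<open>s - \<mu>\<^sub>i\<close> of \<open>s \<cdot> 1 - A\<close> on the span of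
  the \<open>v\<^sub>i\<close> away from 0, so the kernel of \<open>E\<close> lies in the orthogonal complement.\<close>

lemma shifted_mat_orth_complement:
  fixes A :: "real mat"
  assumes A: "A \<in> carrier_mat n n" and sym: "transpose_mat A = A"
    and on: "orthonormal n k v" and ev: "\<forall>i<k. A *\<^sub>v v i = \<mu> i \<cdot>\<^sub>v v i"
    and t: "\<forall>i<k. s - \<mu> i + t \<noteq> 0"
  defines "E \<equiv> s \<cdot>\<^sub>m 1\<^sub>m n - A + t \<cdot>\<^sub>m spectral_mat n k v (\<lambda>_. 1)"
  shows "E \<in> carrier_mat n n"
    and "\<And>u. u \<in> orth_complement n k v \<Longrightarrow> E *\<^sub>v u = s \<cdot>\<^sub>v u - A *\<^sub>v u"
    and "\<And>x. x \<in> carrier_vec n \<Longrightarrow> E *\<^sub>v x = 0\<^sub>v n \<Longrightarrow> x \<in> orth_complement n k v"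
proof -
  define P where "P = spectral_mat n k v (\<lambda>_. 1)"
  have P: "P \<in> carrier_mat n n" by (simp add: P_def)
  have vc: "v i \<in> carrier_vec n" if "i < k" for i using on that by (rule orthonormal_carrier)
  show E: "E \<in> carrier_mat n n" using A by (simp add: E_def)
  have E_apply: "E *\<^sub>v x = (s \<cdot>\<^sub>v x - A *\<^sub>v x) + t \<cdot>\<^sub>v (P *\<^sub>v x)" if x: "x \<in> carrier_vec n" for x
  proof -
    have "E *\<^sub>v x = (s \<cdot>\<^sub>m 1\<^sub>m n - A) *\<^sub>v x + (t \<cdot>\<^sub>m P) *\<^sub>v x"
      unfolding E_def P_def[symmetric] using A P x by (intro add_mult_distrib_mat_vec[of _ n n]) auto
    also have "(s \<cdot>\<^sub>m 1\<^sub>m n - A) *\<^sub>v x = (s \<cdot>\<^sub>m 1\<^sub>m n) *\<^sub>v x - A *\<^sub>v x"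
      using A x by (intro minus_mult_distrib_mat_vec[of _ n n]) auto
    finally show ?thesis
      using A P x by (simp add: smult_mat_mult_mat_vec[OF one_carrier_mat x] smult_mat_mult_mat_vec[OF P x])
  qed
  show "E *\<^sub>v u = s \<cdot>\<^sub>v u - A *\<^sub>v u" if u: "u \<in> orth_complement n k v" for u
  proof -
    have uc: "u \<in> carrier_vec n" using u orth_complement_carrier by auto
    have "t \<cdot>\<^sub>v (P *\<^sub>v u) = 0\<^sub>v n"
      using u vc by (intro eq_vecI) (auto simp: orth_complement_def P_def spectral_mat_mult_vec)
    then show ?thesis using A uc by (simp add: E_apply[OF uc])
  qed
  show "x \<in> orth_complement n k v" if x: "x \<in> carrier_vec n" and Ex: "E *\<^sub>v x = 0\<^sub>v n" for x
  proof -
    have "v j \<bullet> x = 0" if j: "j < k" for j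
    proof -
      have Ax: "A *\<^sub>v x \<in> carrier_vec n" and Px: "P *\<^sub>v x \<in> carrier_vec n" using A P x by auto
      have "v j \<bullet> (E *\<^sub>v x) = v j \<bullet> (s \<cdot>\<^sub>v x - A *\<^sub>v x) + v j \<bullet> (t \<cdot>\<^sub>v (P *\<^sub>v x))"
        unfolding E_apply[OF x] using x Ax Px vc[OF j] by (intro scalar_prod_add_distrib[of _ n]) auto
      also have "v j \<bullet> (s \<cdot>\<^sub>v x - A *\<^sub>v x) = v j \<bullet> (s \<cdot>\<^sub>v x) - v j \<bullet> (A *\<^sub>v x)"
        using x Ax vc[OF j] by (intro scalar_prod_minus_distrib[of _ n]) auto
      also have "v j \<bullet> (t \<cdot>\<^sub>v (P *\<^sub>v x)) = t * (v j \<bullet> x)"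
        using Px vc[OF j] spectral_mat_coeff[OF on j x] by (simp add: P_def)
      finally have "v j \<bullet> (E *\<^sub>v x) = (s - \<mu> j + t) * (v j \<bullet> x)"
        using x vc[OF j] by (simp add: scalar_prod_eigenvector_mult_mat_vec[OF A sym vc[OF j] ev[rule_format, OF j] x]
            algebra_simps)
      then show ?thesis using Ex t j vc[OF j] by simp
    qed
    then show ?thesis using x by (simp add: orth_complement_def)
  qed
qed

text \<open>The supremum \<open>s\<close> of the Rayleigh quotient over the complement is an eigenvalue there:
  otherwise the shifted matrix \<open>E\<close> would be invertible and \<open>rayleigh_quotient_gap\<close> would keep the
  Rayleigh quotient away from \<open>s\<close>.\<close>

lemma eigenvector_at_rayleigh_Sup:
  fixes A :: "real mat"
  assumes A: "A \<in> carrier_mat n n" and sym: "transpose_mat A = A"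
    and on: "orthonormal n k v" and ev: "\<forall>i<k. A *\<^sub>v v i = \<mu> i \<cdot>\<^sub>v v i"
    and le_s: "\<And>u. u \<in> orth_complement n k v \<Longrightarrow> u \<bullet> (A *\<^sub>v u) \<le> s * (u \<bullet> u)"
    and near_s: "\<And>\<delta>. 0 < \<delta> \<Longrightarrow> \<exists>u\<in>orth_complement n k v. u \<bullet> u = 1 \<and> s - \<delta> < u \<bullet> (A *\<^sub>v u)"
  obtains x where "x \<in> orth_complement n k v" and "x \<noteq> 0\<^sub>v n" and "A *\<^sub>v x = s \<cdot>\<^sub>v x"
proof -
  define t where "t = 1 + \<bar>s\<bar> + (\<Sum>i<k. \<bar>\<mu> i\<bar>)"
  define E where "E = s \<cdot>\<^sub>m 1\<^sub>m n - A + t \<cdot>\<^sub>m spectral_mat n k v (\<lambda>_. 1)"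
  have "\<forall>j<k. s - \<mu> j + t \<noteq> 0"
  proof (intro allI impI)
    fix j assume "j < k"
    then have "\<bar>\<mu> j\<bar> \<le> (\<Sum>i<k. \<bar>\<mu> i\<bar>)" by (intro member_le_sum) auto
    then show "s - \<mu> j + t \<noteq> 0" unfolding t_def by linarith
  qed
  note E = shifted_mat_orth_complement[OF A sym on ev this, folded E_def]
  show ?thesis
  proof (cases "det E = 0")
    case True
    then obtain x where x: "x \<in> carrier_vec n" "x \<noteq> 0\<^sub>v n" "E *\<^sub>v x = 0\<^sub>v n"
      using det_0_iff_vec_prod_zero[OF E(1)] by auto
    have xV: "x \<in> orth_complement n k v" using E(3)[OF x(1,3)] .
    have "s \<cdot>\<^sub>v x - A *\<^sub>v x = 0\<^sub>v n" using E(2)[OF xV] x(3) by simp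
    then have "A *\<^sub>v x = s \<cdot>\<^sub>v x"
      using A x(1) by (intro eq_vecI) (auto simp: vec_eq_iff)
    with xV x(2) that show ?thesis by blast
  next
    case False
    from det_non_zero_imp_unit[OF E(1) this, of undefined]
    obtain D where D: "D \<in> carrier_mat n n" and DE: "D * E = 1\<^sub>m n"
      unfolding Units_def ring_mat_def by auto
    have "D *\<^sub>v (s \<cdot>\<^sub>v u - A *\<^sub>v u) = u" if u: "u \<in> orth_complement n k v" for u
    proof -
      have uc: "u \<in> carrier_vec n" using u orth_complement_carrier by auto
      have "D *\<^sub>v (s \<cdot>\<^sub>v u - A *\<^sub>v u) = (D * E) *\<^sub>v u"
        using E(2)[OF u] D E(1) uc by (simp add: assoc_mult_mat_vec[of _ n n _ n])
      then show ?thesis using uc by (simp add: DE)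
    qed
    from rayleigh_quotient_gap[OF A sym orth_complement_carrier orth_complement_lincomb[OF on]
        orth_complement_eigen_invariant[OF A sym on ev] le_s D this]
    obtain \<delta> where "\<delta> > 0" "\<And>u. u \<in> orth_complement n k v \<Longrightarrow> u \<bullet> u = 1 \<Longrightarrow> u \<bullet> (A *\<^sub>v u) \<le> s - \<delta>"
      by blast
    with near_s show ?thesis by force
  qed
qed

lemma orthogonal_eigenvector_exists:
  fixes A :: "real mat"
  assumes A: "A \<in> carrier_mat n n" and sym: "transpose_mat A = A"
    and on: "orthonormal n k v" and ev: "\<forall>i<k. A *\<^sub>v v i = \<mu> i \<cdot>\<^sub>v v i" and kn: "k < n"
  shows "\<exists>x c. x \<in> carrier_vec n \<and> x \<bullet> x = 1 \<and> (\<forall>i<k. v i \<bullet> x = 0) \<and> A *\<^sub>v x = c \<cdot>\<^sub>v x"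
proof -
  obtain b where "b \<in> orth_complement n k v" "b \<noteq> 0\<^sub>v n" using orth_complement_nonzero[OF on kn] .
  note Sup = rayleigh_le_Sup[OF A orth_complement_carrier orth_complement_smult[OF on] this]
  obtain x where x: "x \<in> orth_complement n k v" "x \<noteq> 0\<^sub>v n"
    and eigen: "A *\<^sub>v x = Sup {u \<bullet> (A *\<^sub>v u) | u. u \<in> orth_complement n k v \<and> u \<bullet> u = 1} \<cdot>\<^sub>v x"
    using eigenvector_at_rayleigh_Sup[OF A sym on ev Sup] by blast
  define c where "c = inverse (sqrt (x \<bullet> x))"
  have xc: "x \<in> carrier_vec n" using x(1) orth_complement_carrier by auto
  have "c \<cdot>\<^sub>v x \<in> orth_complement n k v" using orth_complement_smult[OF on x(1)] .
  moreover have "(c \<cdot>\<^sub>v x) \<bullet> (c \<cdot>\<^sub>v x) = 1" unfolding c_def by (rule unit_smult_inverse_sqrt[OF xc x(2)])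
  moreover have "A *\<^sub>v (c \<cdot>\<^sub>v x) = Sup {u \<bullet> (A *\<^sub>v u) | u. u \<in> orth_complement n k v \<and> u \<bullet> u = 1} \<cdot>\<^sub>v (c \<cdot>\<^sub>v x)"
    using A xc by (simp add: mult_mat_vec eigen smult_smult_assoc mult.commute)
  ultimately show ?thesis unfolding orth_complement_def by blast
qed

lemma orthonormal_eigenvectors_exist:
  fixes A :: "real mat"
  assumes A: "A \<in> carrier_mat n n" and sym: "transpose_mat A = A"
  shows "k \<le> n \<Longrightarrow> \<exists>v \<mu>. orthonormal n k v \<and> (\<forall>i<k. A *\<^sub>v v i = \<mu> i \<cdot>\<^sub>v v i)"
proof (induction k)
  case 0
  show ?case by (auto simp: orthonormal_def)
next
  case (Suc k)
  then obtain v \<mu> where on: "orthonormal n k v" and ev: "\<forall>i<k. A *\<^sub>v v i = \<mu> i \<cdot>\<^sub>v v i" by auto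
  obtain x c where x: "x \<in> carrier_vec n" "x \<bullet> x = 1" "\<forall>i<k. v i \<bullet> x = 0" "A *\<^sub>v x = c \<cdot>\<^sub>v x"
    using orthogonal_eigenvector_exists[OF A sym on ev] Suc(2) by auto
  have "orthonormal n (Suc k) (v(k := x))" using orthonormal_extend[OF on x(1,2)] x(3) by simp
  moreover have "\<forall>i<Suc k. A *\<^sub>v (v(k := x)) i = (\<mu>(k := c)) i \<cdot>\<^sub>v (v(k := x)) i"
    using ev x(4) by (auto simp: less_Suc_eq)
  ultimately show ?case by blast
qed

theorem symmetric_spectral_decomposition:
  fixes A :: "real mat"
  assumes A: "A \<in> carrier_mat n n" and sym: "transpose_mat A = A"
  obtains v \<mu> where "orthonormal n n v" and "A = spectral_mat n n v \<mu>"
proof -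
  obtain v \<mu> where on: "orthonormal n n v" and ev: "\<forall>i<n. A *\<^sub>v v i = \<mu> i \<cdot>\<^sub>v v i"
    using orthonormal_eigenvectors_exist[OF A sym, of n] by auto
  have vc: "v i \<in> carrier_vec n" if "i < n" for i using on that by (rule orthonormal_carrier)
  have "A = spectral_mat n n v \<mu>"
  proof (rule mat_eq_if_mult_vec_eq[OF A spectral_mat_carrier])
    fix x :: "real vec" assume x: "x \<in> carrier_vec n"
    show "A *\<^sub>v x = spectral_mat n n v \<mu> *\<^sub>v x"
    proof (rule orthonormal_basis_vec_eq[OF on])
      fix j assume j: "j < n"
      have "v j \<bullet> (A *\<^sub>v x) = \<mu> j * (v j \<bullet> x)"
        by (rule scalar_prod_eigenvector_mult_mat_vec[OF A sym vc[OF j] ev[rule_format, OF j] x])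
      also have "\<dots> = v j \<bullet> (spectral_mat n n v \<mu> *\<^sub>v x)" by (rule spectral_mat_coeff[OF on j x, symmetric])
      finally show "v j \<bullet> (A *\<^sub>v x) = v j \<bullet> (spectral_mat n n v \<mu> *\<^sub>v x)" .
    qed (use A x in \<open>auto intro: mult_mat_vec_carrier[OF spectral_mat_carrier]\<close>)
  qed
  with on that show ?thesis by blast
qed

section \<open>Largest eigenvalue and Moore--Penrose inverse\<close>

lemma spectral_mat_weight_eq:
  assumes on: "orthonormal n k v" and i: "i < k"
  shows "v i \<bullet> (spectral_mat n k v f *\<^sub>v v i) = f i"
  using spectral_mat_coeff[OF on i orthonormal_carrier[OF on i]] orthonormal_scalar_prod[OF on i i] by simp

lemma sym_nnd_spectral_mat_weight_nonneg:
  assumes "sym_nnd n (spectral_mat n n v f)" and on: "orthonormal n n v" and i: "i < n"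
  shows "0 \<le> f i"
  using assms spectral_mat_weight_eq[OF on i] orthonormal_carrier[OF on i] by (metis sym_nnd_def)

lemma eigenvalue_spectral_mat_iff:
  assumes on: "orthonormal n n v"
  shows "eigenvalue (spectral_mat n n v \<theta>) c \<longleftrightarrow> (\<exists>i<n. \<theta> i = c)"
proof
  assume "eigenvalue (spectral_mat n n v \<theta>) c"
  then obtain x where x: "x \<in> carrier_vec n" "x \<noteq> 0\<^sub>v n" "spectral_mat n n v \<theta> *\<^sub>v x = c \<cdot>\<^sub>v x"
    unfolding eigenvalue_def eigenvector_def by auto
  show "\<exists>i<n. \<theta> i = c"
  proof (rule ccontr)
    assume ne: "\<not> (\<exists>i<n. \<theta> i = c)"
    have "v j \<bullet> x = v j \<bullet> 0\<^sub>v n" if j: "j < n" for j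
    proof -
      have "\<theta> j * (v j \<bullet> x) = c * (v j \<bullet> x)"
        using spectral_mat_coeff[OF on j x(1), of \<theta>] x orthonormal_carrier[OF on j] by auto
      then show ?thesis using ne j orthonormal_carrier[OF on j] by auto
    qed
    then have "x = 0\<^sub>v n" using orthonormal_basis_vec_eq[OF on x(1)] by simp
    with x(2) show False by simp
  qed
next
  assume "\<exists>i<n. \<theta> i = c"
  then obtain i where i: "i < n" "\<theta> i = c" by blast
  have vi: "v i \<in> carrier_vec n" using on i(1) by (rule orthonormal_carrier)
  have "v i \<noteq> 0\<^sub>v n" using orthonormal_scalar_prod[OF on i(1) i(1)] by auto
  moreover have "spectral_mat n n v \<theta> *\<^sub>v v i = c \<cdot>\<^sub>v v i"
  proof (rule orthonormal_basis_vec_eq[OF on])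
    fix j assume j: "j < n"
    show "v j \<bullet> (spectral_mat n n v \<theta> *\<^sub>v v i) = v j \<bullet> (c \<cdot>\<^sub>v v i)"
      using spectral_mat_coeff[OF on j vi] orthonormal_scalar_prod[OF on j i(1)]
        orthonormal_carrier[OF on j] vi i by auto
  qed (use vi in \<open>auto intro: mult_mat_vec_carrier[OF spectral_mat_carrier]\<close>)
  ultimately show "eigenvalue (spectral_mat n n v \<theta>) c"
    unfolding eigenvalue_def eigenvector_def using vi by auto
qed

lemma lambda_max_spectral_mat:
  assumes "orthonormal n n v"
  shows "lambda_max (spectral_mat n n v \<theta>) = Max (\<theta> ` {..<n})"
proof -
  have "{c. eigenvalue (spectral_mat n n v \<theta>) c} = \<theta> ` {..<n}"
    using eigenvalue_spectral_mat_iff[OF assms] by auto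
  then show ?thesis by (simp add: lambda_max_def)
qed

lemma lambda_max_rayleigh:
  fixes A :: "real mat"
  assumes A: "A \<in> carrier_mat n n" and sym: "transpose_mat A = A" and n: "0 < n"
    and y: "y \<in> carrier_vec n"
  shows "y \<bullet> (A *\<^sub>v y) \<le> lambda_max A * (y \<bullet> y)"
proof -
  obtain v \<theta> where on: "orthonormal n n v" and A_eq: "A = spectral_mat n n v \<theta>"
    using symmetric_spectral_decomposition[OF A sym] .
  have "y \<bullet> (A *\<^sub>v y) = (\<Sum>i<n. \<theta> i * (v i \<bullet> y)^2)"
    unfolding A_eq by (rule spectral_mat_quadratic_form[OF on y])
  also have "\<dots> \<le> (\<Sum>i<n. Max (\<theta> ` {..<n}) * (v i \<bullet> y)^2)"
    by (intro sum_mono mult_right_mono) auto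
  also have "\<dots> = lambda_max A * (y \<bullet> y)"
    by (simp add: A_eq lambda_max_spectral_mat[OF on] parseval[OF on y] sum_distrib_left)
  finally show ?thesis .
qed

lemma lambda_max_nonneg:
  assumes A: "sym_nnd n A" and n: "0 < n"
  shows "0 \<le> lambda_max A"
proof -
  obtain v \<theta> where on: "orthonormal n n v" and A_eq: "A = spectral_mat n n v \<theta>"
    using symmetric_spectral_decomposition[of A n] A unfolding sym_nnd_def by blast
  have "0 \<le> \<theta> 0" using sym_nnd_spectral_mat_weight_nonneg[OF A[unfolded A_eq] on n] .
  also have "\<theta> 0 \<le> Max (\<theta> ` {..<n})" using n by (intro Max_ge) auto
  finally show ?thesis by (simp add: A_eq lambda_max_spectral_mat[OF on])
qed

lemma penrose_mult_left_eq:
  fixes A G1 G2 :: "real mat"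
  assumes A: "A \<in> carrier_mat a b" and G1: "G1 \<in> carrier_mat b a" and G2: "G2 \<in> carrier_mat b a"
    and p1: "A * G1 * A = A" and s1: "transpose_mat (A * G1) = A * G1"
    and p2: "A * G2 * A = A" and s2: "transpose_mat (A * G2) = A * G2"
  shows "A * G1 = A * G2"
proof -
  have At: "transpose_mat A = transpose_mat A * (A * G2)"
  proof -
    have "transpose_mat A = transpose_mat (A * G2 * A)" using p2 by simp
    also have "\<dots> = transpose_mat A * transpose_mat (A * G2)"
      by (rule transpose_mult[of _ a a]) (use A G2 in auto)
    also have "\<dots> = transpose_mat A * (A * G2)" using s2 by simp
    finally show ?thesis .
  qed
  have "A * G1 = transpose_mat (A * G1)" using s1 by simp
  also have "\<dots> = transpose_mat G1 * transpose_mat A" by (rule transpose_mult[OF A G1])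
  also have "\<dots> = transpose_mat G1 * (transpose_mat A * (A * G2))" using At by metis
  also have "\<dots> = (transpose_mat G1 * transpose_mat A) * (A * G2)"
    using assoc_mult_mat[of "transpose_mat G1" a b "transpose_mat A" a "A * G2" a] A G1 G2 by (simp del: assoc_mult_mat)
  also have "transpose_mat G1 * transpose_mat A = A * G1"
    using transpose_mult[OF A G1] s1 by simp
  also have "A * G1 * (A * G2) = (A * G1 * A) * G2"
    using assoc_mult_mat[of "A * G1" a a A b G2 a] A G1 G2 by (simp del: assoc_mult_mat)
  also have "\<dots> = A * G2" using p1 by simp
  finally show ?thesis .
qed

lemma penrose_mult_right_eq:
  fixes A G1 G2 :: "real mat"
  assumes A: "A \<in> carrier_mat a b" and G1: "G1 \<in> carrier_mat b a" and G2: "G2 \<in> carrier_mat b a"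
    and p1: "A * G1 * A = A" and s1: "transpose_mat (G1 * A) = G1 * A"
    and p2: "A * G2 * A = A" and s2: "transpose_mat (G2 * A) = G2 * A"
  shows "G1 * A = G2 * A"
proof -
  have At: "transpose_mat A = (G2 * A) * transpose_mat A"
  proof -
    have "transpose_mat A = transpose_mat (A * (G2 * A))" using p2 A G2 by simp
    also have "\<dots> = transpose_mat (G2 * A) * transpose_mat A"
      by (rule transpose_mult[of _ a b]) (use A G2 in auto)
    also have "\<dots> = (G2 * A) * transpose_mat A" using s2 by simp
    finally show ?thesis .
  qed
  have "G1 * A = transpose_mat (G1 * A)" using s1 by simp
  also have "\<dots> = transpose_mat A * transpose_mat G1" by (rule transpose_mult[OF G1 A])
  also have "\<dots> = ((G2 * A) * transpose_mat A) * transpose_mat G1" using At by metis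
  also have "\<dots> = (G2 * A) * (transpose_mat A * transpose_mat G1)"
    using assoc_mult_mat[of "G2 * A" b b "transpose_mat A" a "transpose_mat G1" b] A G1 G2 by (simp del: assoc_mult_mat)
  also have "transpose_mat A * transpose_mat G1 = G1 * A"
    using transpose_mult[OF G1 A] s1 by simp
  also have "G2 * A * (G1 * A) = G2 * (A * G1 * A)"
    using assoc_mult_mat[of "G2 * A" b b G1 a A b] assoc_mult_mat[of G2 b a A b "G1 * A" b]
      assoc_mult_mat[of A a b G1 a A b] A G1 G2 by (simp del: assoc_mult_mat)
  also have "\<dots> = G2 * A" using p1 by simp
  finally show ?thesis .
qed

lemma penrose_unique:
  fixes A G1 G2 :: "real mat"
  assumes A: "A \<in> carrier_mat a b" and G1: "G1 \<in> carrier_mat b a" and G2: "G2 \<in> carrier_mat b a"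
    and p1: "A * G1 * A = A" "G1 * A * G1 = G1" "transpose_mat (A * G1) = A * G1" "transpose_mat (G1 * A) = G1 * A"
    and p2: "A * G2 * A = A" "G2 * A * G2 = G2" "transpose_mat (A * G2) = A * G2" "transpose_mat (G2 * A) = G2 * A"
  shows "G1 = G2"
proof -
  have AG: "A * G1 = A * G2" by (rule penrose_mult_left_eq[OF A G1 G2 p1(1) p1(3) p2(1) p2(3)])
  have GA: "G1 * A = G2 * A" by (rule penrose_mult_right_eq[OF A G1 G2 p1(1) p1(4) p2(1) p2(4)])
  have "G1 = G1 * A * G1" using p1 by simp
  also have "\<dots> = G1 * (A * G1)" using A G1 by simp
  also have "\<dots> = G1 * (A * G2)" using AG by simp
  also have "\<dots> = (G1 * A) * G2" using A G1 G2 by simp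
  also have "\<dots> = (G2 * A) * G2" using GA by simp
  also have "\<dots> = G2" using p2 by simp
  finally show ?thesis .
qed

lemma pinv_eqI:
  fixes A G :: "real mat"
  assumes G: "G \<in> carrier_mat (dim_col A) (dim_row A)"
    and penrose: "A * G * A = A" "G * A * G = G"
      "transpose_mat (A * G) = A * G" "transpose_mat (G * A) = G * A"
  shows "pinv A = G"
  unfolding pinv_def
proof (rule the_equality)
  fix G' assume "G' \<in> carrier_mat (dim_col A) (dim_row A) \<and> A * G' * A = A \<and> G' * A * G' = G' \<and>
      transpose_mat (A * G') = A * G' \<and> transpose_mat (G' * A) = G' * A"
  then show "G' = G"
    using penrose_unique[of A "dim_row A" "dim_col A" G' G] G penrose by auto
qed (use G penrose in simp)

(* Zero weights stay zero because inverse 0 = 0 in HOL. *)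
lemma pinv_spectral_mat:
  assumes on: "orthonormal n n v"
  shows "pinv (spectral_mat n n v \<mu>) = spectral_mat n n v (\<lambda>i. inverse (\<mu> i))"
proof (rule pinv_eqI)
  have "(\<lambda>i. \<mu> i * inverse (\<mu> i) * \<mu> i) = \<mu>"
    and "(\<lambda>i. inverse (\<mu> i) * \<mu> i * inverse (\<mu> i)) = (\<lambda>i. inverse (\<mu> i))"
    by (auto intro!: ext simp: field_simps)
  then show "spectral_mat n n v \<mu> * spectral_mat n n v (\<lambda>i. inverse (\<mu> i)) * spectral_mat n n v \<mu>
      = spectral_mat n n v \<mu>"
    "spectral_mat n n v (\<lambda>i. inverse (\<mu> i)) * spectral_mat n n v \<mu> * spectral_mat n n v (\<lambda>i. inverse (\<mu> i))
      = spectral_mat n n v (\<lambda>i. inverse (\<mu> i))"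
    by (simp_all only: spectral_mat_mult[OF on])
qed (simp_all add: spectral_mat_mult[OF on])

section \<open>The trace inequality\<close>

lemma quadratic_form_eq_double_sum:
  fixes M :: "real mat"
  assumes M: "M \<in> carrier_mat n n" and x: "x \<in> carrier_vec n"
  shows "x \<bullet> (M *\<^sub>v x) = (\<Sum>a<n. \<Sum>b<n. x $ a * M $$ (a,b) * x $ b)"
  using M x by (simp add: scalar_prod_def row_def lessThan_atLeast0 sum_distrib_left mult_ac)

lemma mtrace_transpose_mult_spectral_mat:
  fixes Y :: "real mat"
  assumes Y: "Y \<in> carrier_mat n c" and on: "orthonormal n n u"
  shows "mtrace (transpose_mat Y * spectral_mat n n u \<sigma> * Y) =
           (\<Sum>i<n. \<sigma> i * ((transpose_mat Y *\<^sub>v u i) \<bullet> (transpose_mat Y *\<^sub>v u i)))"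
proof -
  let ?S = "spectral_mat n n u \<sigma>"
  have uc: "u i \<in> carrier_vec n" if "i < n" for i using on that by (simp add: orthonormal_carrier)
  have cY: "col Y j \<in> carrier_vec n" if "j < c" for j using Y that by simp
  have entry: "(transpose_mat Y * ?S * Y) $$ (j,j) = (\<Sum>i<n. \<sigma> i * ((transpose_mat Y *\<^sub>v u i) $ j)^2)"
    if j: "j < c" for j
  proof -
    have "transpose_mat Y * ?S * Y = transpose_mat Y * (?S * Y)"
      using assoc_mult_mat[of "transpose_mat Y" c n ?S n Y c] Y by simp
    hence "(transpose_mat Y * ?S * Y) $$ (j,j) = row (transpose_mat Y) j \<bullet> col (?S * Y) j"
      using Y j by simp
    also have "\<dots> = col Y j \<bullet> (?S *\<^sub>v col Y j)" using Y j col_mult2[of ?S n n Y c j] by simp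
    also have "\<dots> = (\<Sum>i<n. \<sigma> i * (u i \<bullet> col Y j)^2)" by (rule spectral_mat_quadratic_form[OF on cY[OF j]])
    also have "\<dots> = (\<Sum>i<n. \<sigma> i * ((transpose_mat Y *\<^sub>v u i) $ j)^2)"
    proof (intro sum.cong refl)
      fix i assume "i \<in> {..<n}"
      hence i: "i < n" by simp
      have "(transpose_mat Y *\<^sub>v u i) $ j = col Y j \<bullet> u i" using Y j by simp
      also have "\<dots> = u i \<bullet> col Y j" by (rule comm_scalar_prod[OF cY[OF j] uc[OF i]])
      finally show "\<sigma> i * (u i \<bullet> col Y j)^2 = \<sigma> i * ((transpose_mat Y *\<^sub>v u i) $ j)^2" by simp
    qed
    finally show ?thesis .
  qed
  have "mtrace (transpose_mat Y * ?S * Y) = (\<Sum>j<c. \<Sum>i<n. \<sigma> i * ((transpose_mat Y *\<^sub>v u i) $ j)^2)"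
    unfolding mtrace_def using Y entry by simp
  also have "\<dots> = (\<Sum>i<n. \<Sum>j<c. \<sigma> i * ((transpose_mat Y *\<^sub>v u i) $ j)^2)" by (rule sum.swap)
  also have "\<dots> = (\<Sum>i<n. \<sigma> i * ((transpose_mat Y *\<^sub>v u i) \<bullet> (transpose_mat Y *\<^sub>v u i)))"
  proof (intro sum.cong refl)
    fix i assume "i \<in> {..<n}"
    hence i: "i < n" by simp
    have "transpose_mat Y *\<^sub>v u i \<in> carrier_vec c" using Y uc[OF i] by simp
    thus "(\<Sum>j<c. \<sigma> i * ((transpose_mat Y *\<^sub>v u i) $ j)^2) = \<sigma> i * ((transpose_mat Y *\<^sub>v u i) \<bullet> (transpose_mat Y *\<^sub>v u i))"
      by (simp add: scalar_prod_self_eq_sum_squares sum_distrib_left)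
  qed
  finally show ?thesis .
qed

lemma Nmat_entry:
  assumes B: "\<forall>l\<in>{1..K}. B l \<in> carrier_mat m (s l)" and a: "a < m" and b: "b < m"
  shows "Nmat m K w B $$ (a,b) = (\<Sum>l\<in>{1..K}. w l * (B l * transpose_mat (B l)) $$ (a,b))"
proof -
  have "Nmat m K w B $$ (a,b) = (\<Sum>l\<in>{1..K}. (w l \<cdot>\<^sub>m (B l * transpose_mat (B l))) $$ (a,b))"
    unfolding Nmat_def using a b by simp
  also have "\<dots> = (\<Sum>l\<in>{1..K}. w l * (B l * transpose_mat (B l)) $$ (a,b))"
  proof (intro sum.cong refl)
    fix l assume l: "l \<in> {1..K}"
    have "B l \<in> carrier_mat m (s l)" using B l by blast
    then have "B l * transpose_mat (B l) \<in> carrier_mat m m" by simp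
    hence "dim_row (B l * transpose_mat (B l)) = m" "dim_col (B l * transpose_mat (B l)) = m" by auto
    thus "(w l \<cdot>\<^sub>m (B l * transpose_mat (B l))) $$ (a,b) = w l * (B l * transpose_mat (B l)) $$ (a,b)"
      using a b by simp
  qed
  finally show ?thesis .
qed

lemma Nmat_carrier: "Nmat m K w B \<in> carrier_mat m m"
  by (simp add: Nmat_def)

lemma transpose_Nmat:
  assumes B: "\<And>l. l \<in> {1..K} \<Longrightarrow> B l \<in> carrier_mat m (s l)"
  shows "transpose_mat (Nmat m K w B) = Nmat m K w B"
proof (rule eq_matI)
  fix a b assume a: "a < dim_row (Nmat m K w B)" and b: "b < dim_col (Nmat m K w B)"
  hence a: "a < m" and b: "b < m" by (simp_all add: Nmat_def)
  have sy: "(B l * transpose_mat (B l)) $$ (b,a) = (B l * transpose_mat (B l)) $$ (a,b)" if l: "l \<in> {1..K}" for l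
  proof -
    have "transpose_mat (B l * transpose_mat (B l)) = transpose_mat (transpose_mat (B l)) * transpose_mat (B l)"
      by (rule transpose_mult[of _ m "s l" _ m]) (use B[OF l] in auto)
    hence "transpose_mat (B l * transpose_mat (B l)) = B l * transpose_mat (B l)" by simp
    hence "transpose_mat (B l * transpose_mat (B l)) $$ (a,b) = (B l * transpose_mat (B l)) $$ (a,b)" by simp
    thus ?thesis using a b B[OF l] by simp
  qed
  show "transpose_mat (Nmat m K w B) $$ (a,b) = Nmat m K w B $$ (a,b)"
  proof -
    have B': "\<forall>l\<in>{1..K}. B l \<in> carrier_mat m (s l)" using B by blast
    have "transpose_mat (Nmat m K w B) $$ (a,b) = Nmat m K w B $$ (b,a)"
      using a b by (simp add: Nmat_def)
    also have "\<dots> = (\<Sum>l\<in>{1..K}. w l * (B l * transpose_mat (B l)) $$ (b,a))"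
      by (rule Nmat_entry[OF B' b a])
    also have "\<dots> = (\<Sum>l\<in>{1..K}. w l * (B l * transpose_mat (B l)) $$ (a,b))"
      using sy by simp
    also have "\<dots> = Nmat m K w B $$ (a,b)" by (rule Nmat_entry[OF B' a b, symmetric])
    finally show ?thesis .
  qed
qed (simp_all add: Nmat_def)

lemma Nmat_quadratic_form:
  assumes B: "\<And>l. l \<in> {1..K} \<Longrightarrow> B l \<in> carrier_mat m (s l)" and x: "x \<in> carrier_vec m"
  shows "x \<bullet> (Nmat m K w B *\<^sub>v x) =
    (\<Sum>l\<in>{1..K}. w l * ((transpose_mat (B l) *\<^sub>v x) \<bullet> (transpose_mat (B l) *\<^sub>v x)))"
proof -
  let ?C = "\<lambda>l. B l * transpose_mat (B l)"
  have B': "\<forall>l\<in>{1..K}. B l \<in> carrier_mat m (s l)" using B by blast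
  have "x \<bullet> (Nmat m K w B *\<^sub>v x) = (\<Sum>a<m. \<Sum>b<m. x $ a * Nmat m K w B $$ (a,b) * x $ b)"
    by (rule quadratic_form_eq_double_sum[OF Nmat_carrier x])
  also have "\<dots> = (\<Sum>a<m. \<Sum>b<m. \<Sum>l\<in>{1..K}. w l * (x $ a * ?C l $$ (a,b) * x $ b))"
    by (intro sum.cong refl) (simp add: Nmat_entry[OF B'] sum_distrib_left sum_distrib_right mult_ac)
  also have "\<dots> = (\<Sum>a<m. \<Sum>l\<in>{1..K}. \<Sum>b<m. w l * (x $ a * ?C l $$ (a,b) * x $ b))"
    by (rule sum.cong[OF refl], rule sum.swap)
  also have "\<dots> = (\<Sum>l\<in>{1..K}. \<Sum>a<m. \<Sum>b<m. w l * (x $ a * ?C l $$ (a,b) * x $ b))"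
    by (rule sum.swap)
  also have "\<dots> = (\<Sum>l\<in>{1..K}. w l * (x \<bullet> (?C l *\<^sub>v x)))"
  proof (intro sum.cong refl)
    fix l assume l: "l \<in> {1..K}"
    have "x \<bullet> (?C l *\<^sub>v x) = (\<Sum>a<m. \<Sum>b<m. x $ a * ?C l $$ (a,b) * x $ b)"
      by (rule quadratic_form_eq_double_sum[OF _ x]) (use B[OF l] in simp)
    thus "(\<Sum>a<m. \<Sum>b<m. w l * (x $ a * ?C l $$ (a,b) * x $ b)) = w l * (x \<bullet> (?C l *\<^sub>v x))"
      by (simp add: sum_distrib_left)
  qed
  also have "\<dots> = (\<Sum>l\<in>{1..K}. w l * ((transpose_mat (B l) *\<^sub>v x) \<bullet> (transpose_mat (B l) *\<^sub>v x)))"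
  proof (intro sum.cong refl)
    fix l assume l: "l \<in> {1..K}"
    have Bl: "B l \<in> carrier_mat m (s l)" by (rule B[OF l])
    have Btx: "transpose_mat (B l) *\<^sub>v x \<in> carrier_vec (s l)" using Bl x by simp
    have "?C l *\<^sub>v x = B l *\<^sub>v (transpose_mat (B l) *\<^sub>v x)"
      using Bl x by (simp add: assoc_mult_mat_vec[of _ m "s l" _ m])
    moreover have "(transpose_mat (B l) *\<^sub>v x) \<bullet> (transpose_mat (B l) *\<^sub>v x) = x \<bullet> (B l *\<^sub>v (transpose_mat (B l) *\<^sub>v x))"
      by (rule transpose_vec_mult_scalar[OF Bl Btx x])
    ultimately show "w l * (x \<bullet> (?C l *\<^sub>v x)) = w l * ((transpose_mat (B l) *\<^sub>v x) \<bullet> (transpose_mat (B l) *\<^sub>v x))"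
      by simp
  qed
  finally show ?thesis .
qed

lemma sym_nnd_cauchy_schwarz:
  assumes N: "sym_nnd n N" and a: "a \<in> carrier_vec n" and x: "x \<in> carrier_vec n"
  shows "(a \<bullet> (N *\<^sub>v x))^2 \<le> (a \<bullet> (N *\<^sub>v a)) * (x \<bullet> (N *\<^sub>v x))"
proof -
  have Nc: "N \<in> carrier_mat n n" and sym: "transpose_mat N = N"
    and nonneg: "\<And>v. v \<in> carrier_vec n \<Longrightarrow> 0 \<le> v \<bullet> (N *\<^sub>v v)"
    using N unfolding sym_nnd_def by auto
  have "(a \<bullet> (N *\<^sub>v x))^2 \<le> (x \<bullet> (N *\<^sub>v x)) * (a \<bullet> (N *\<^sub>v a))"
  proof (rule quadratic_nonneg_imp_discriminant_le)
    fix t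
    show "0 \<le> x \<bullet> (N *\<^sub>v x) + 2 * t * (a \<bullet> (N *\<^sub>v x)) + t^2 * (a \<bullet> (N *\<^sub>v a))"
      using nonneg[of "x + t \<cdot>\<^sub>v a"] x a by (simp add: quadratic_form_add_smult[OF Nc sym x a])
  qed (rule nonneg[OF a])
  then show ?thesis by (simp add: mult.commute)
qed

lemma quadratic_form_congruence:
  fixes G X :: "real mat"
  assumes G: "G \<in> carrier_mat m m" and X: "X \<in> carrier_mat m r" and y: "y \<in> carrier_vec r"
  shows "y \<bullet> ((transpose_mat X * G * X) *\<^sub>v y) = (X *\<^sub>v y) \<bullet> (G *\<^sub>v (X *\<^sub>v y))"
proof -
  have GXy: "G *\<^sub>v (X *\<^sub>v y) \<in> carrier_vec m" using G X y by simp
  have "(transpose_mat X * G * X) *\<^sub>v y = transpose_mat X *\<^sub>v (G *\<^sub>v (X *\<^sub>v y))"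
    using X G y assoc_mult_mat_vec[of "transpose_mat X" r m "G * X" r y]
      assoc_mult_mat_vec[of G m m X r y] by simp
  then have "y \<bullet> ((transpose_mat X * G * X) *\<^sub>v y) = (transpose_mat X *\<^sub>v (G *\<^sub>v (X *\<^sub>v y))) \<bullet> y"
    using y X GXy by (simp add: comm_scalar_prod[of y r])
  also have "\<dots> = (G *\<^sub>v (X *\<^sub>v y)) \<bullet> (X *\<^sub>v y)" by (rule transpose_vec_mult_scalar[OF X y GXy])
  also have "\<dots> = (X *\<^sub>v y) \<bullet> (G *\<^sub>v (X *\<^sub>v y))" using X y GXy by (simp add: comm_scalar_prod[of _ m])
  finally show ?thesis .
qed

lemma sym_nnd_congruence:
  fixes G X :: "real mat"
  assumes G: "sym_nnd m G" and X: "X \<in> carrier_mat m r"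
  shows "sym_nnd r (transpose_mat X * G * X)"
proof -
  have Gc: "G \<in> carrier_mat m m" and sym: "transpose_mat G = G"
    and nonneg: "\<And>v. v \<in> carrier_vec m \<Longrightarrow> 0 \<le> v \<bullet> (G *\<^sub>v v)"
    using G unfolding sym_nnd_def by auto
  have "transpose_mat (transpose_mat X * G * X) = transpose_mat X * transpose_mat (transpose_mat X * G)"
    using X Gc by (intro transpose_mult[of _ r m _ r]) auto
  also have "transpose_mat (transpose_mat X * G) = G * X"
    using X Gc transpose_mult[of "transpose_mat X" r m G m] by (simp add: sym)
  also have "transpose_mat X * (G * X) = transpose_mat X * G * X" using X Gc by simp
  finally have "transpose_mat (transpose_mat X * G * X) = transpose_mat X * G * X" .
  moreover have "0 \<le> y \<bullet> ((transpose_mat X * G * X) *\<^sub>v y)" if "y \<in> carrier_vec r" for y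
    unfolding quadratic_form_congruence[OF Gc X that] using X that by (intro nonneg) simp
  moreover have "transpose_mat X * G * X \<in> carrier_mat r r" using X Gc by simp
  ultimately show ?thesis unfolding sym_nnd_def by blast
qed

lemma sym_nnd_pinv:
  assumes N: "sym_nnd n N"
  shows "sym_nnd n (pinv N)" and "N * pinv N * N = N"
proof -
  have Nc: "N \<in> carrier_mat n n" and sym: "transpose_mat N = N" using N unfolding sym_nnd_def by auto
  obtain v \<nu> where on: "orthonormal n n v" and N_eq: "N = spectral_mat n n v \<nu>"
    using symmetric_spectral_decomposition[OF Nc sym] .
  have \<nu>: "0 \<le> \<nu> i" if "i < n" for i
    using sym_nnd_spectral_mat_weight_nonneg[OF N[unfolded N_eq] on that] .
  show "sym_nnd n (pinv N)"
    unfolding sym_nnd_def N_eq pinv_spectral_mat[OF on]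
    using \<nu> by (auto simp: spectral_mat_quadratic_form[OF on] intro!: sum_nonneg)
  have "(\<lambda>i. \<nu> i * inverse (\<nu> i) * \<nu> i) = \<nu>" by (auto intro!: ext simp: field_simps)
  then show "N * pinv N * N = N"
    unfolding N_eq pinv_spectral_mat[OF on] by (simp only: spectral_mat_mult[OF on])
qed

lemma mtrace_le_of_sq_norm_le:
  fixes \<Sigma> Y :: "real mat" and Z :: "'i \<Rightarrow> real mat"
  assumes \<Sigma>: "sym_nnd m \<Sigma>" and Y: "Y \<in> carrier_mat m c"
    and Z: "\<And>l. l \<in> L \<Longrightarrow> Z l \<in> carrier_mat m (d l)"
    and le: "\<And>x. x \<in> carrier_vec m \<Longrightarrow> (transpose_mat Y *\<^sub>v x) \<bullet> (transpose_mat Y *\<^sub>v x)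
               \<le> (\<Sum>l\<in>L. a l * ((transpose_mat (Z l) *\<^sub>v x) \<bullet> (transpose_mat (Z l) *\<^sub>v x)))"
  shows "mtrace (transpose_mat Y * \<Sigma> * Y) \<le> (\<Sum>l\<in>L. a l * mtrace (transpose_mat (Z l) * \<Sigma> * Z l))"
proof -
  obtain u \<sigma> where on: "orthonormal m m u" and \<Sigma>_eq: "\<Sigma> = spectral_mat m m u \<sigma>"
    using symmetric_spectral_decomposition[of \<Sigma> m] \<Sigma> unfolding sym_nnd_def by blast
  have \<sigma>: "0 \<le> \<sigma> i" if "i < m" for i
    using sym_nnd_spectral_mat_weight_nonneg[OF \<Sigma>[unfolded \<Sigma>_eq] on that] .
  let ?q = "\<lambda>M i. (transpose_mat M *\<^sub>v u i) \<bullet> (transpose_mat M *\<^sub>v u i)"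
  have "mtrace (transpose_mat Y * \<Sigma> * Y) = (\<Sum>i<m. \<sigma> i * ?q Y i)"
    unfolding \<Sigma>_eq by (rule mtrace_transpose_mult_spectral_mat[OF Y on])
  also have "\<dots> \<le> (\<Sum>i<m. \<sigma> i * (\<Sum>l\<in>L. a l * ?q (Z l) i))"
    using on \<sigma> by (intro sum_mono mult_left_mono le) (auto simp: orthonormal_carrier)
  also have "\<dots> = (\<Sum>l\<in>L. a l * (\<Sum>i<m. \<sigma> i * ?q (Z l) i))"
    by (simp add: sum_distrib_left sum.swap[of _ L] mult_ac)
  also have "\<dots> = (\<Sum>l\<in>L. a l * mtrace (transpose_mat (Z l) * \<Sigma> * Z l))"
    unfolding \<Sigma>_eq by (intro sum.cong refl) (simp add: mtrace_transpose_mult_spectral_mat[OF Z on])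
  finally show ?thesis .
qed

lemma cauchy_schwarz_pinv_col_space:
  fixes N X :: "real mat"
  assumes N: "sym_nnd m N" and X: "X \<in> carrier_mat m r"
    and col: "col_space X \<subseteq> col_space N" and x: "x \<in> carrier_vec m"
  defines "y \<equiv> transpose_mat X *\<^sub>v x"
  shows "(y \<bullet> y)^2 \<le> (y \<bullet> ((transpose_mat X * pinv N * X) *\<^sub>v y)) * (x \<bullet> (N *\<^sub>v x))"
proof -
  define G where "G = pinv N"
  have Nc: "N \<in> carrier_mat m m" and Nsym: "transpose_mat N = N" using N unfolding sym_nnd_def by auto
  have "sym_nnd m G" and NGN: "N * G * N = N" unfolding G_def by (rule sym_nnd_pinv[OF N])+
  then have Gc: "G \<in> carrier_mat m m" by (simp add: sym_nnd_def)
  have yc: "y \<in> carrier_vec r" and Xy: "X *\<^sub>v y \<in> carrier_vec m" using X x by (simp_all add: y_def)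
  have "X *\<^sub>v y \<in> col_space N" using col yc X unfolding col_space_def by auto
  then obtain z where z: "z \<in> carrier_vec m" "X *\<^sub>v y = N *\<^sub>v z"
    using Nc unfolding col_space_def by auto
  define a where "a = G *\<^sub>v (X *\<^sub>v y)"
  have ac: "a \<in> carrier_vec m" using Gc Xy by (simp add: a_def)
  have "N *\<^sub>v a = N *\<^sub>v (G *\<^sub>v (N *\<^sub>v z))" by (simp add: a_def z(2))
  also have "\<dots> = (N * G * N) *\<^sub>v z" using Nc Gc z(1) by (simp add: assoc_mult_mat_vec[of _ m m _ m])
  finally have Na: "N *\<^sub>v a = X *\<^sub>v y" using NGN z(2) by simp
  have "y \<bullet> y = (transpose_mat X *\<^sub>v x) \<bullet> y" by (simp add: y_def)
  also have "\<dots> = x \<bullet> (X *\<^sub>v y)" by (rule transpose_vec_mult_scalar[OF X yc x])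
  also have "\<dots> = a \<bullet> (N *\<^sub>v x)" using scalar_prod_mult_mat_vec_sym[OF Nc Nsym x ac] by (simp add: Na)
  finally have yy: "y \<bullet> y = a \<bullet> (N *\<^sub>v x)" .
  have "a \<bullet> (N *\<^sub>v a) = (X *\<^sub>v y) \<bullet> a" unfolding Na using ac Xy by (rule comm_scalar_prod)
  also have "\<dots> = y \<bullet> ((transpose_mat X * G * X) *\<^sub>v y)"
    unfolding a_def quadratic_form_congruence[OF Gc X yc] ..
  finally have aNa: "a \<bullet> (N *\<^sub>v a) = y \<bullet> ((transpose_mat X * pinv N * X) *\<^sub>v y)" by (simp add: G_def)
  show ?thesis using sym_nnd_cauchy_schwarz[OF N ac x] by (simp add: yy aNa)
qed

lemma sq_norm_transpose_le_lambda_max_pinv: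
  fixes N X :: "real mat"
  assumes N: "sym_nnd m N" and X: "X \<in> carrier_mat m r" and r: "0 < r"
    and col: "col_space X \<subseteq> col_space N" and x: "x \<in> carrier_vec m"
  shows "(transpose_mat X *\<^sub>v x) \<bullet> (transpose_mat X *\<^sub>v x)
           \<le> lambda_max (transpose_mat X * pinv N * X) * (x \<bullet> (N *\<^sub>v x))"
proof -
  define M where "M = transpose_mat X * pinv N * X"
  define y where "y = transpose_mat X *\<^sub>v x"
  have M: "sym_nnd r M" unfolding M_def by (rule sym_nnd_congruence[OF sym_nnd_pinv(1)[OF N] X])
  have lam: "0 \<le> lambda_max M" by (rule lambda_max_nonneg[OF M r])
  have N_nonneg: "0 \<le> x \<bullet> (N *\<^sub>v x)" using N x unfolding sym_nnd_def by auto
  have yc: "y \<in> carrier_vec r" using X x by (simp add: y_def)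
  have "(y \<bullet> y)^2 \<le> (y \<bullet> (M *\<^sub>v y)) * (x \<bullet> (N *\<^sub>v x))"
    unfolding M_def y_def by (rule cauchy_schwarz_pinv_col_space[OF N X col x])
  also have "\<dots> \<le> (lambda_max M * (y \<bullet> y)) * (x \<bullet> (N *\<^sub>v x))"
    using M N_nonneg yc r unfolding sym_nnd_def by (intro mult_right_mono lambda_max_rayleigh) auto
  finally have "(y \<bullet> y) * (y \<bullet> y) \<le> (y \<bullet> y) * (lambda_max M * (x \<bullet> (N *\<^sub>v x)))"
    by (simp add: power2_eq_square mult_ac)
  then have "y \<bullet> y \<le> lambda_max M * (x \<bullet> (N *\<^sub>v x))"
    using scalar_prod_self_nonneg[of y] lam N_nonneg
    by (cases "y \<bullet> y = 0") (auto simp: mult_le_cancel_left)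
  then show ?thesis by (simp add: y_def M_def)
qed

lemma sym_nnd_Nmat:
  assumes B: "\<And>l. l \<in> {1..K} \<Longrightarrow> B l \<in> carrier_mat m (s l)"
    and w_nn: "\<And>l. l \<in> {1..K} \<Longrightarrow> 0 \<le> w l"
  shows "sym_nnd m (Nmat m K w B)"
  unfolding sym_nnd_def
proof (intro conjI ballI Nmat_carrier transpose_Nmat[OF B])
  fix v :: "real vec" assume v: "v \<in> carrier_vec m"
  have "0 \<le> (\<Sum>l\<in>{1..K}. w l * ((transpose_mat (B l) *\<^sub>v v) \<bullet> (transpose_mat (B l) *\<^sub>v v)))"
    using w_nn by (intro sum_nonneg mult_nonneg_nonneg scalar_prod_self_nonneg) auto
  then show "0 \<le> v \<bullet> (Nmat m K w B *\<^sub>v v)" by (simp only: Nmat_quadratic_form[OF B v])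
qed

theorem lemma1:
  fixes m K r :: nat and s :: "nat \<Rightarrow> nat" and B :: "nat \<Rightarrow> real mat"
    and \<alpha> :: real and \<Sigma> X :: "real mat" and w :: "nat \<Rightarrow> real"
  assumes "0 < m" and "0 < K" and "0 < r"
    and B: "\<And>l. l \<in> {1..K} \<Longrightarrow> B l \<in> carrier_mat m (s l)"
    and \<Sigma>: "sym_nnd m \<Sigma>"
    and tr: "\<And>l. l \<in> {1..K} \<Longrightarrow> mtrace (transpose_mat (B l) * \<Sigma> * B l) \<le> \<alpha>"
    and w_nn: "\<And>l. l \<in> {1..K} \<Longrightarrow> 0 \<le> w l"
    and w_sum: "(\<Sum>l\<in>{1..K}. w l) = 1"
    and X: "X \<in> carrier_mat m r"
    and col: "col_space X \<subseteq> col_space (Nmat m K w B)"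
  shows "mtrace (transpose_mat X * \<Sigma> * X)
           \<le> \<alpha> * lambda_max (transpose_mat X * pinv (Nmat m K w B) * X)"
proof -
  define N where "N = Nmat m K w B"
  define lam where "lam = lambda_max (transpose_mat X * pinv N * X)"
  have N: "sym_nnd m N" unfolding N_def by (rule sym_nnd_Nmat[OF B w_nn])
  have lam: "0 \<le> lam"
    unfolding lam_def using sym_nnd_congruence[OF sym_nnd_pinv(1)[OF N] X] \<open>0 < r\<close>
    by (rule lambda_max_nonneg)
  have "mtrace (transpose_mat X * \<Sigma> * X) \<le> (\<Sum>l\<in>{1..K}. lam * w l * mtrace (transpose_mat (B l) * \<Sigma> * B l))"
  proof (rule mtrace_le_of_sq_norm_le[OF \<Sigma> X B])
    fix x :: "real vec" assume x: "x \<in> carrier_vec m"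
    have "(transpose_mat X *\<^sub>v x) \<bullet> (transpose_mat X *\<^sub>v x) \<le> lam * (x \<bullet> (N *\<^sub>v x))"
      unfolding lam_def by (rule sq_norm_transpose_le_lambda_max_pinv[OF N X \<open>0 < r\<close> col[folded N_def] x])
    also have "x \<bullet> (N *\<^sub>v x) = (\<Sum>l\<in>{1..K}. w l * ((transpose_mat (B l) *\<^sub>v x) \<bullet> (transpose_mat (B l) *\<^sub>v x)))"
      unfolding N_def by (rule Nmat_quadratic_form[OF B x])
    finally show "(transpose_mat X *\<^sub>v x) \<bullet> (transpose_mat X *\<^sub>v x) \<le> (\<Sum>l\<in>{1..K}. lam * w l *
        ((transpose_mat (B l) *\<^sub>v x) \<bullet> (transpose_mat (B l) *\<^sub>v x)))"
      by (simp add: sum_distrib_left mult_ac)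
  qed
  also have "\<dots> \<le> (\<Sum>l\<in>{1..K}. lam * w l * \<alpha>)"
    using lam w_nn by (intro sum_mono mult_left_mono tr mult_nonneg_nonneg) auto
  also have "\<dots> = lam * \<alpha> * (\<Sum>l\<in>{1..K}. w l)" by (simp add: sum_distrib_left mult_ac)
  finally show ?thesis using w_sum by (simp add: lam_def N_def mult.commute)
qed

end
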